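(* Let $K\ge2$ be an integer, let $\phi,\Phi$ be the standard normal PDF and CDF, and let $t\mapsto\tilde\alpha_t\in[0,1)$ be a differentiable (Gaussian) noise schedule with time-derivative $\tilde\alpha_t'$. Define $$\mathcal T(\tilde\alpha_t)=\frac{K}{K-1}\left[\int_{-\infty}^{\infty}\phi(z-\nu_t)\Phi^{K-1}(z)\,dz-\frac1K\right],\qquad \nu_t=\frac{\tilde\alpha_t}{\sqrt{1-\tilde\alpha_t^2}},$$ and for $n\ge0$ let $M_n=\int_{-\infty}^\infty z^n\phi(z)\Phi^{K-1}(z)\,dz$ and $I_n=\int_{-\infty}^\infty z^{n+1}\phi(z)\Phi^{K-1}(z)\,dz$. Then $$\frac{d}{dt}\mathcal T(\tilde\alpha_t)=\frac{K\,e^{-\nu_t^2/2}}{K-1}\,\frac{\tilde\alpha_t'}{(1-\tilde\alpha_t^2)^{3/2}}\sum_{n=0}^{\infty}\frac{\nu_t^n}{n!}\big[I_n-\nu_tM_n\big].$$ *)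

theory Defs
  imports "HOL-Probability.Probability"
begin

abbreviation std_phi :: "real \<Rightarrow> real" where
  "std_phi \<equiv> std_normal_density"

definition std_Phi :: "real \<Rightarrow> real" where
  "std_Phi x = (LBINT z:{..x}. std_normal_density z)"

definition nu_of :: "real \<Rightarrow> real" where
  "nu_of a = a / sqrt (1 - a\<^sup>2)"

definition calT :: "nat \<Rightarrow> real \<Rightarrow> real" where
  "calT K a = real K / (real K - 1) *
     ((LBINT z. std_phi (z - nu_of a) * std_Phi z ^ (K - 1)) - 1 / real K)"

definition M_mom :: "nat \<Rightarrow> nat \<Rightarrow> real" where
  "M_mom K n = (LBINT z. z ^ n * std_phi z * std_Phi z ^ (K - 1))"

definition I_mom :: "nat \<Rightarrow> nat \<Rightarrow> real" where
  "I_mom K n = (LBINT z. z ^ (n + 1) * std_phi z * std_Phi z ^ (K - 1))"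

end

theory Submission
  imports Defs
begin

text \<open>
  Completing the square gives \<open>\<phi>(z - \<nu>) = exp (-\<nu>\<^sup>2/2) exp (\<nu> z) \<phi>(z)\<close>, so the integral in
  \<open>calT\<close> is \<open>exp (-\<nu>\<^sup>2/2) P(\<nu>)\<close> with \<open>P(\<nu>) = \<integral> exp (\<nu> z) \<phi>(z) \<Phi>(z)^(K-1) dz = \<Sum> M\<^sub>n \<nu>\<^sup>n / n!\<close>.
  Integrating the exponential series termwise is justified by dominated convergence with
  majorant \<open>exp (|\<nu>| |z|) \<phi>(z)\<close>; this only uses that \<open>\<Phi>^(K-1)\<close> is bounded and measurable.
  Since \<open>I\<^sub>n = M\<^sub>n\<^sub>+\<^sub>1\<close>, the entire power series \<open>P\<close> has derivative \<open>\<Sum> I\<^sub>n \<nu>\<^sup>n / n!\<close>, so the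
  product rule gives \<open>exp (-\<nu>\<^sup>2/2) \<Sum> \<nu>\<^sup>n / n! (I\<^sub>n - \<nu> M\<^sub>n)\<close> as the \<open>\<nu>\<close>-derivative. The chain rule
  through \<open>\<nu> = \<alpha> / sqrt (1 - \<alpha>\<^sup>2)\<close>, whose derivative is \<open>(1 - \<alpha>\<^sup>2) powr (-3/2)\<close>, finishes
  the proof.
\<close>

lemma integrable_indicator_std_normal:
  "A \<in> sets borel \<Longrightarrow> integrable lborel (\<lambda>z. indicator A z * std_phi z)"
  using integrable_mult_indicator[of A lborel std_phi] by simp

lemma std_Phi_mono: "mono std_Phi"
proof (rule monoI)
  fix x y :: real
  assume "x \<le> y"
  then have "(LBINT z. indicator {..x} z * std_phi z) \<le> (LBINT z. indicator {..y} z * std_phi z)"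
    by (intro integral_mono integrable_indicator_std_normal) (auto simp: indicator_def)
  then show "std_Phi x \<le> std_Phi y"
    by (simp add: std_Phi_def set_lebesgue_integral_def)
qed

lemma std_Phi_nonneg: "0 \<le> std_Phi x"
  unfolding std_Phi_def set_lebesgue_integral_def by (intro integral_nonneg_AE) auto

lemma std_Phi_le_1: "std_Phi x \<le> 1"
proof -
  have "(LBINT z. indicator {..x} z * std_phi z) \<le> (LBINT z. std_phi z)"
    by (intro integral_mono integrable_indicator_std_normal) (auto simp: indicator_def)
  then show ?thesis by (simp add: std_Phi_def set_lebesgue_integral_def)
qed

lemma borel_measurable_std_Phi [measurable]: "std_Phi \<in> borel_measurable borel"
  by (rule borel_measurable_mono[OF std_Phi_mono])

lemma nu_of_has_real_derivative:
  assumes "\<bar>a\<bar> < 1"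
  shows "(nu_of has_real_derivative 1 / (1 - a\<^sup>2) powr (3/2)) (at a)"
proof -
  have pos: "0 < 1 - a\<^sup>2" using assms by (simp add: abs_square_less_1)
  have "(1 - a\<^sup>2) powr (3/2) = (1 - a\<^sup>2) powr (1 + 1/2)"
    by simp
  also have "\<dots> = (1 - a\<^sup>2) * sqrt (1 - a\<^sup>2)"
    using pos by (simp only: powr_add powr_half_sqrt) simp
  also have "\<dots> = (sqrt (1 - a\<^sup>2))\<^sup>2 / (sqrt (1 - a\<^sup>2) + a * (a / sqrt (1 - a\<^sup>2)))"
    using pos by (simp add: field_simps power2_eq_square)
  finally have "1 / (1 - a\<^sup>2) powr (3/2) = (sqrt (1 - a\<^sup>2) + a * (a / sqrt (1 - a\<^sup>2))) / (sqrt (1 - a\<^sup>2))\<^sup>2"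
    by simp
  moreover have "(nu_of has_real_derivative
      (sqrt (1 - a\<^sup>2) + a * (a / sqrt (1 - a\<^sup>2))) / (sqrt (1 - a\<^sup>2))\<^sup>2) (at a)"
    unfolding nu_of_def[abs_def] using pos
    by (auto intro!: derivative_eq_intros simp: power2_eq_square field_simps)
  ultimately show ?thesis by simp
qed

lemma abs_exp_partial_sum_le: "\<bar>\<Sum>n<N. y ^ n / fact n\<bar> \<le> exp \<bar>y\<bar>"
  for y :: real
proof -
  have exp_sums: "(\<lambda>n. \<bar>y\<bar> ^ n / fact n) sums exp \<bar>y\<bar>"
    using exp_converges[of "\<bar>y\<bar>"] by (simp add: field_simps)
  have "\<bar>\<Sum>n<N. y ^ n / fact n\<bar> \<le> (\<Sum>n<N. \<bar>y\<bar> ^ n / fact n)"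
    by (rule order_trans[OF sum_abs]) (simp add: power_abs)
  also have "\<dots> \<le> (\<Sum>n. \<bar>y\<bar> ^ n / fact n)"
    using exp_sums by (intro sum_le_suminf) (auto simp: sums_iff)
  finally show ?thesis
    using exp_sums by (simp add: sums_iff)
qed

lemma integrable_exp_abs_std_normal: "integrable lborel (\<lambda>z. exp (c * \<bar>z\<bar>) * std_phi z)"
proof -
  have exp_normal: "exp (d * z) * std_phi z = exp (d\<^sup>2 / 2) * normal_density d 1 z" for d z
    by (simp add: normal_density_def mult_exp_exp power2_eq_square field_simps)
  have "integrable lborel (\<lambda>z. exp (c * z) * std_phi z + exp (- c * z) * std_phi z)"
    unfolding exp_normal by simp
  moreover
  have "exp (c * \<bar>z\<bar>) \<le> exp (c * z) + exp (- c * z)" for z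
    by (cases "z \<ge> 0") (auto simp: add_increasing add_increasing2)
  then have "exp (c * \<bar>z\<bar>) * std_phi z \<le> exp (c * z) * std_phi z + exp (- c * z) * std_phi z" for z
    by (metis distrib_right mult_right_mono normal_density_nonneg)
  ultimately show ?thesis
    by (elim Bochner_Integration.integrable_bound) (auto intro: add_nonneg_nonneg)
qed

lemma integrable_std_normal_moment_bounded:
  assumes [measurable]: "g \<in> borel_measurable borel" and g_bound: "\<And>z. \<bar>g z\<bar> \<le> B"
  shows "integrable lborel (\<lambda>z. z ^ n * std_phi z * g z)"
proof (rule Bochner_Integration.integrable_bound)
  show "integrable lborel (\<lambda>z. B * (std_phi z * \<bar>z\<bar> ^ n))"
    using integrable_std_normal_moment_abs by simp
  show "AE z in lborel. norm (z ^ n * std_phi z * g z) \<le> norm (B * (std_phi z * \<bar>z\<bar> ^ n))"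
  proof (intro AE_I2)
    fix z
    have "0 \<le> B" using order_trans[OF abs_ge_zero g_bound] .
    have "\<bar>z\<bar> ^ n * std_phi z * \<bar>g z\<bar> \<le> \<bar>z\<bar> ^ n * std_phi z * B"
      using g_bound by (intro mult_left_mono) auto
    with \<open>0 \<le> B\<close> show "norm (z ^ n * std_phi z * g z) \<le> norm (B * (std_phi z * \<bar>z\<bar> ^ n))"
      by (simp add: abs_mult power_abs mult_ac)
  qed
qed simp

lemma std_normal_exp_moment_sums:
  assumes [measurable]: "g \<in> borel_measurable borel" and g_bound: "\<And>z. \<bar>g z\<bar> \<le> B"
  shows "(\<lambda>n. x ^ n / fact n * (LBINT z. z ^ n * std_phi z * g z))
           sums (LBINT z. exp (x * z) * std_phi z * g z)"
proof -
  define s where "s N z = (\<Sum>n<N. (x * z) ^ n / fact n) * (std_phi z * g z)" for N z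
  have "(\<lambda>N. LBINT z. s N z) \<longlonglongrightarrow> (LBINT z. exp (x * z) * std_phi z * g z)"
  proof (rule integral_dominated_convergence)
    show "integrable lborel (\<lambda>z. B * (exp (\<bar>x\<bar> * \<bar>z\<bar>) * std_phi z))"
      using integrable_exp_abs_std_normal by simp
    have "(\<lambda>N. \<Sum>n<N. (x * z) ^ n / fact n) \<longlonglongrightarrow> exp (x * z)" for z
      using exp_converges[of "x * z"] by (simp add: sums_def field_simps)
    then show "AE z in lborel. (\<lambda>N. s N z) \<longlonglongrightarrow> exp (x * z) * std_phi z * g z"
      unfolding s_def mult.assoc by (intro AE_I2 tendsto_mult_right)
    show "AE z in lborel. norm (s N z) \<le> B * (exp (\<bar>x\<bar> * \<bar>z\<bar>) * std_phi z)" for N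
    proof (intro AE_I2)
      fix z
      have "\<bar>\<Sum>n<N. (x * z) ^ n / fact n\<bar> \<le> exp (\<bar>x\<bar> * \<bar>z\<bar>)"
        using abs_exp_partial_sum_le[of "x * z" N] by (simp add: abs_mult)
      then have "\<bar>s N z\<bar> \<le> exp (\<bar>x\<bar> * \<bar>z\<bar>) * (std_phi z * B)"
        unfolding s_def abs_mult by (intro mult_mono mult_left_mono g_bound) auto
      then show "norm (s N z) \<le> B * (exp (\<bar>x\<bar> * \<bar>z\<bar>) * std_phi z)"
        by (simp add: abs_mult mult_ac)
    qed
  qed (simp_all add: s_def)
  moreover have "(LBINT z. s N z) = (\<Sum>n<N. x ^ n / fact n * (LBINT z. z ^ n * std_phi z * g z))" for N
  proof -
    have "s N z = (\<Sum>n<N. x ^ n / fact n * (z ^ n * std_phi z * g z))" for z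
      unfolding s_def sum_distrib_right by (simp add: field_simps)
    then show ?thesis
      using integrable_std_normal_moment_bounded[OF assms] by (simp add: integral_sum)
  qed
  ultimately show ?thesis
    by (simp add: sums_def)
qed

lemma std_normal_density_shift:
  "std_phi (z - v) = exp (- v\<^sup>2 / 2) * (exp (v * z) * std_phi z)"
proof -
  have "- (z - v)\<^sup>2 / 2 = - v\<^sup>2 / 2 + (v * z + - z\<^sup>2 / 2)"
    by (simp add: power2_eq_square field_simps)
  then show ?thesis
    unfolding std_normal_density_def by (simp only: exp_add mult_ac)
qed

lemma std_normal_shift_integral_has_derivative:
  assumes g_meas: "g \<in> borel_measurable borel" and g_bound: "\<And>z. \<bar>g z\<bar> \<le> B"
  defines "m n \<equiv> LBINT z. z ^ n * std_phi z * g z"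
  shows "summable (\<lambda>n. v ^ n / fact n * (m (Suc n) - v * m n))"
    and "((\<lambda>v. LBINT z. std_phi (z - v) * g z) has_real_derivative
           exp (- v\<^sup>2 / 2) * (\<Sum>n. v ^ n / fact n * (m (Suc n) - v * m n))) (at v)"
proof -
  define P where "P y = (\<Sum>n. m n / fact n * y ^ n)" for y
  define P' where "P' y = (\<Sum>n. m (Suc n) / fact n * y ^ n)" for y
  have P_sums: "(\<lambda>n. m n / fact n * y ^ n) sums (LBINT z. exp (y * z) * std_phi z * g z)" for y
    using std_normal_exp_moment_sums[OF g_meas g_bound, of y] by (simp add: m_def mult_ac)
  then have summable_P: "summable (\<lambda>n. m n / fact n * y ^ n)" for y
    by (auto simp: sums_iff)
  have diffs_m: "diffs (\<lambda>n. m n / fact n) = (\<lambda>n. m (Suc n) / fact n)"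
    by (simp add: diffs_def fun_eq_iff)
  have P_deriv: "(P has_real_derivative P' v) (at v)"
    using termdiffs_strong_converges_everywhere[OF summable_P] unfolding diffs_m
    by (simp add: P_def[abs_def] P'_def)
  have "(\<lambda>n. m (Suc n) / fact n * v ^ n) sums P' v"
    using termdiff_converges_all[OF summable_P, of v] unfolding diffs_m
    by (simp add: P'_def sums_iff)
  from sums_diff[OF this sums_mult[OF summable_sums[OF summable_P], of v]]
  have series: "(\<lambda>n. v ^ n / fact n * (m (Suc n) - v * m n)) sums (P' v - v * P v)"
    by (simp add: P_def algebra_simps)
  then show "summable (\<lambda>n. v ^ n / fact n * (m (Suc n) - v * m n))"
    by (simp add: sums_iff)
  have "(LBINT z. std_phi (z - y) * g z) = exp (- y\<^sup>2 / 2) * (LBINT z. exp (y * z) * std_phi z * g z)" for y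
    by (subst integral_mult_right_zero[symmetric]) (simp add: std_normal_density_shift mult_ac)
  then have "(LBINT z. std_phi (z - y) * g z) = exp (- y\<^sup>2 / 2) * P y" for y
    using sums_unique2[OF P_sums summable_sums[OF summable_P]] by (simp add: P_def)
  moreover have "((\<lambda>y. exp (- y\<^sup>2 / 2) * P y) has_real_derivative
      exp (- v\<^sup>2 / 2) * (P' v - v * P v)) (at v)"
    by (auto intro!: derivative_eq_intros P_deriv simp: algebra_simps)
  ultimately show "((\<lambda>v. LBINT z. std_phi (z - v) * g z) has_real_derivative
      exp (- v\<^sup>2 / 2) * (\<Sum>n. v ^ n / fact n * (m (Suc n) - v * m n))) (at v)"
    using sums_unique[OF series] by simp
qed

theorem proposition8:
  fixes K :: nat and \<alpha> \<alpha>' :: "real \<Rightarrow> real" and t :: real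
  assumes "K \<ge> 2"
    and "\<And>s. 0 \<le> \<alpha> s \<and> \<alpha> s < 1"
    and "\<And>s. (\<alpha> has_real_derivative \<alpha>' s) (at s)"
  shows "\<exists>S. (\<lambda>n. nu_of (\<alpha> t) ^ n / fact n * (I_mom K n - nu_of (\<alpha> t) * M_mom K n)) sums S \<and>
    ((\<lambda>s. calT K (\<alpha> s)) has_real_derivative
       (real K * exp (- (nu_of (\<alpha> t))\<^sup>2 / 2) / (real K - 1)
        * (\<alpha>' t / (1 - (\<alpha> t)\<^sup>2) powr (3/2)) * S)) (at t)"
proof -
  define S where "S = (\<Sum>n. nu_of (\<alpha> t) ^ n / fact n * (I_mom K n - nu_of (\<alpha> t) * M_mom K n))"
  have Phi_pow_measurable: "(\<lambda>z. std_Phi z ^ (K - 1)) \<in> borel_measurable borel"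
    by measurable
  have Phi_pow_bound: "\<bar>std_Phi z ^ (K - 1)\<bar> \<le> 1" for z
    using std_Phi_nonneg std_Phi_le_1 by (simp add: power_le_one)
  note shift_deriv = std_normal_shift_integral_has_derivative[OF Phi_pow_measurable Phi_pow_bound,
      of "nu_of (\<alpha> t)"]
  have series: "(\<lambda>n. nu_of (\<alpha> t) ^ n / fact n * (I_mom K n - nu_of (\<alpha> t) * M_mom K n)) sums S"
    using summable_sums[OF shift_deriv(1)] by (simp add: S_def M_mom_def I_mom_def)
  have deriv_integral: "((\<lambda>v. LBINT z. std_phi (z - v) * std_Phi z ^ (K - 1)) has_real_derivative
      exp (- (nu_of (\<alpha> t))\<^sup>2 / 2) * S) (at (nu_of (\<alpha> t)))"
    using shift_deriv(2) by (simp add: S_def M_mom_def I_mom_def)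
  have "\<bar>\<alpha> t\<bar> < 1"
    using assms(2)[of t] by simp
  from DERIV_chain2[OF nu_of_has_real_derivative[OF this] assms(3)]
  have "((\<lambda>s. nu_of (\<alpha> s)) has_real_derivative 1 / (1 - (\<alpha> t)\<^sup>2) powr (3/2) * \<alpha>' t) (at t)" .
  from DERIV_chain2[OF deriv_integral this]
  have "((\<lambda>s. calT K (\<alpha> s)) has_real_derivative real K / (real K - 1) *
      (exp (- (nu_of (\<alpha> t))\<^sup>2 / 2) * S * (1 / (1 - (\<alpha> t)\<^sup>2) powr (3/2) * \<alpha>' t) - 0)) (at t)"
    unfolding calT_def by (intro DERIV_cmult DERIV_diff DERIV_const)
  with series show ?thesis
    by (intro exI[of _ S]) (simp add: field_simps)
qed

end
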